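(* Let $H=\sum_{a=1}^M H_a$ be a stoquastic frustration-free Hamiltonian on $\mathcal{Q}^n$ and let $\Pi_a$ be the spectral projector of $H_a$ onto its zero eigenvalue. Suppose $H|\psi\rangle=0$ for some non-negative state $|\psi\rangle$. If for some $x\in\mathcal{S}(\psi)$, $y\in\{0,1\}^n$ and $a\in\{1,\ldots,M\}$ one has $\langle y|H_a|x\rangle<0$, then $y\in\mathcal{S}(\psi)$ and $$\frac{\langle y|\psi\rangle}{\langle x|\psi\rangle}=\sqrt{\frac{\langle y|\Pi_a|y\rangle}{\langle x|\Pi_a|x\rangle}}.$$
   Context: $\mathcal{Q}^n=(\mathbb{C}^2)^{\otimes n}$ with standard basis $\{|x\rangle\}$, $x\in\{0,1\}^n$. $H=\sum_a H_a$ is a local Hamiltonian (each $H_a$ acts non-trivially on $O(1)$ qubits). It is stoquastic if each $H_a$ has real non-positive off-diagonal entries in the standard basis, and frustration-free if each $H_a$ is positive semidefinite and the ground-state of $H$ is a zero eigenvector of every $H_a$. A non-negative state is a normalized vector with real non-negative amplitudes in the standard basis; its support is $\mathcal{S}(\psi)=\{x:\langle x|\psi\rangle>0\}$. *)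

theory Defs
  imports Complex_Main
begin

text \<open>Standard basis of the n-qubit space: bit strings of length n.
  Vectors and operators are functions on bit strings; only their values on
  the basis matter.\<close>

definition basis :: "nat \<Rightarrow> bool list set" where
  "basis n = {x. length x = n}"

type_synonym qvec = "bool list \<Rightarrow> complex"
type_synonym qop = "bool list \<Rightarrow> bool list \<Rightarrow> complex"

text \<open>Matrix entry convention: A x y = <x|A|y>.\<close>

definition mat_vec :: "nat \<Rightarrow> qop \<Rightarrow> qvec \<Rightarrow> qvec" where
  "mat_vec n A v = (\<lambda>x. \<Sum>y\<in>basis n. A x y * v y)"

definition mat_mult :: "nat \<Rightarrow> qop \<Rightarrow> qop \<Rightarrow> qop" where
  "mat_mult n A B = (\<lambda>x z. \<Sum>y\<in>basis n. A x y * B y z)"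

definition hermitian :: "nat \<Rightarrow> qop \<Rightarrow> bool" where
  "hermitian n A \<longleftrightarrow> (\<forall>x\<in>basis n. \<forall>y\<in>basis n. A y x = cnj (A x y))"

definition psd :: "nat \<Rightarrow> qop \<Rightarrow> bool" where
  "psd n A \<longleftrightarrow> hermitian n A \<and>
     (\<forall>v. 0 \<le> Re (\<Sum>x\<in>basis n. cnj (v x) * mat_vec n A v x))"

text \<open>Locality: A acts non-trivially only on the qubits in S.\<close>

definition acts_on :: "nat \<Rightarrow> nat set \<Rightarrow> qop \<Rightarrow> bool" where
  "acts_on n S A \<longleftrightarrow> (\<exists>h :: (nat \<Rightarrow> bool) \<Rightarrow> (nat \<Rightarrow> bool) \<Rightarrow> complex.
     \<forall>x\<in>basis n. \<forall>y\<in>basis n.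
       A x y = (if (\<forall>i<n. i \<notin> S \<longrightarrow> x ! i = y ! i)
                then h (\<lambda>i. i \<in> S \<and> x ! i) (\<lambda>i. i \<in> S \<and> y ! i) else 0))"

definition k_local :: "nat \<Rightarrow> nat \<Rightarrow> qop \<Rightarrow> bool" where
  "k_local n k A \<longleftrightarrow> (\<exists>S. S \<subseteq> {..<n} \<and> card S \<le> k \<and> acts_on n S A)"

definition stoquastic_term :: "nat \<Rightarrow> qop \<Rightarrow> bool" where
  "stoquastic_term n A \<longleftrightarrow> (\<forall>x\<in>basis n. \<forall>y\<in>basis n.
      x \<noteq> y \<longrightarrow> A x y \<in> \<real> \<and> Re (A x y) \<le> 0)"

definition ham_sum :: "nat \<Rightarrow> (nat \<Rightarrow> qop) \<Rightarrow> qop" where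
  "ham_sum M Hs = (\<lambda>x y. \<Sum>a=1..M. Hs a x y)"

definition eigvec :: "nat \<Rightarrow> qop \<Rightarrow> qvec \<Rightarrow> complex \<Rightarrow> bool" where
  "eigvec n A v lam \<longleftrightarrow> (\<exists>x\<in>basis n. v x \<noteq> 0) \<and>
     (\<forall>x\<in>basis n. mat_vec n A v x = lam * v x)"

definition ground_state :: "nat \<Rightarrow> qop \<Rightarrow> qvec \<Rightarrow> bool" where
  "ground_state n A v \<longleftrightarrow> (\<exists>lam. eigvec n A v lam \<and>
     (\<forall>w mu. eigvec n A w mu \<longrightarrow> Re lam \<le> Re mu))"

definition frustration_free :: "nat \<Rightarrow> nat \<Rightarrow> (nat \<Rightarrow> qop) \<Rightarrow> bool" where
  "frustration_free n M Hs \<longleftrightarrow> (\<forall>a\<in>{1..M}. psd n (Hs a)) \<and>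
     (\<forall>v. ground_state n (ham_sum M Hs) v \<longrightarrow>
        (\<forall>a\<in>{1..M}. \<forall>x\<in>basis n. mat_vec n (Hs a) v x = 0))"

definition zero_projector :: "nat \<Rightarrow> qop \<Rightarrow> qop \<Rightarrow> bool" where
  "zero_projector n A P \<longleftrightarrow> hermitian n P \<and>
     (\<forall>x\<in>basis n. \<forall>y\<in>basis n. mat_mult n P P x y = P x y) \<and>
     (\<forall>v. (\<forall>x\<in>basis n. mat_vec n A v x = 0) \<longleftrightarrow>
          (\<forall>x\<in>basis n. mat_vec n P v x = v x))"

definition nonneg_state :: "nat \<Rightarrow> qvec \<Rightarrow> bool" where
  "nonneg_state n psi \<longleftrightarrow> (\<forall>x\<in>basis n. psi x \<in> \<real> \<and> 0 \<le> Re (psi x)) \<and>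
     (\<Sum>x\<in>basis n. (cmod (psi x))\<^sup>2) = 1"

definition support :: "nat \<Rightarrow> qvec \<Rightarrow> bool list set" where
  "support n psi = {x\<in>basis n. 0 < Re (psi x)}"

end

theory Submission
  imports Defs
begin

text \<open>Since the terms are positive semidefinite, \<open>H \<psi> = 0\<close> makes \<open>\<psi>\<close> a ground state, so by
  frustration-freeness \<open>H\<^sub>a \<psi> = 0\<close>. The \<open>y\<close>-row of \<open>H\<^sub>a \<psi> = 0\<close> forces \<open>\<psi>(y) > 0\<close>.
  For a stoquastic positive semidefinite \<open>A\<close>, the entrywise modulus \<open>|w|\<close> of a kernel vector
  \<open>w\<close> minimises the real quadratic form of \<open>A\<close>, hence lies in its kernel; reading off the
  \<open>x\<close>-row shows that \<open>w(x) = 0\<close> forces \<open>w(y) = 0\<close> whenever \<open>\<langle>y|A|x\<rangle> < 0\<close>. Applied to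
  \<open>w = v - (v(x)/\<psi>(x)) \<psi>\<close>, every kernel vector \<open>v\<close> satisfies \<open>v(y) \<psi>(x) = v(x) \<psi>(y)\<close>.
  The columns of \<open>\<Pi>\<^sub>a\<close> are kernel vectors, and together with hermiticity this gives
  \<open>\<langle>y|\<Pi>\<^sub>a|y\<rangle> / \<langle>x|\<Pi>\<^sub>a|x\<rangle> = (\<psi>(y)/\<psi>(x))\<^sup>2\<close>.\<close>

lemma finite_basis: "finite (basis n)"
proof -
  have "basis n = {xs. set xs \<subseteq> (UNIV::bool set) \<and> length xs = n}"
    by (auto simp: basis_def)
  thus ?thesis using finite_lists_length_eq[of "UNIV::bool set" n] by simp
qed

definition quad_form :: "'a set \<Rightarrow> ('a \<Rightarrow> 'a \<Rightarrow> real) \<Rightarrow> ('a \<Rightarrow> real) \<Rightarrow> real" where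
  "quad_form S R f = (\<Sum>u\<in>S. \<Sum>v\<in>S. f u * R u v * f v)"

lemma quad_form_add_point:
  assumes "finite S" "x \<in> S" and sym: "\<forall>u\<in>S. \<forall>v\<in>S. R u v = R v u"
  shows "quad_form S R (\<lambda>u. f u + (if u = x then t else 0))
    = quad_form S R f + 2 * t * (\<Sum>v\<in>S. R x v * f v) + t\<^sup>2 * R x x"
proof -
  let ?d = "\<lambda>u. if u = x then t else 0"
  have point: "(\<Sum>u\<in>S. ?d u * g u) = t * g x" for g :: "'a \<Rightarrow> real"
  proof -
    have "(\<Sum>u\<in>S. ?d u * g u) = (\<Sum>u\<in>S. if u = x then t * g u else 0)"
      by (intro sum.cong) auto
    then show ?thesis using assms(1,2) by simp
  qed
  have expand: "(f u + ?d u) * R u v * (f v + ?d v) = f u * R u v * f v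
      + ?d u * (R u v * f v) + ?d v * (f u * R u v) + ?d u * (?d v * R u v)" for u v
    by (simp only: algebra_simps)
  have "quad_form S R (\<lambda>u. f u + ?d u) = quad_form S R f
      + (\<Sum>u\<in>S. ?d u * (\<Sum>v\<in>S. R u v * f v)) + (\<Sum>u\<in>S. \<Sum>v\<in>S. ?d v * (f u * R u v))
      + (\<Sum>u\<in>S. ?d u * (\<Sum>v\<in>S. ?d v * R u v))"
    unfolding quad_form_def expand by (simp only: sum.distrib sum_distrib_left)
  also have "(\<Sum>u\<in>S. \<Sum>v\<in>S. ?d v * (f u * R u v)) = t * (\<Sum>v\<in>S. R x v * f v)"
    using sym assms(2) by (simp only: point sum_distrib_left[symmetric]) (auto intro: sum.cong)
  also have "(\<Sum>u\<in>S. ?d u * (\<Sum>v\<in>S. ?d v * R u v)) = t * (t * R x x)"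
    by (simp only: point)
  finally show ?thesis by (simp add: point power2_eq_square algebra_simps)
qed

text \<open>Otherwise moving the \<open>x\<close>-coordinate of \<open>f\<close> by \<open>-b/d\<close> would make the form negative.\<close>

lemma quad_form_minimiser_kernel:
  assumes "finite S" "x \<in> S" and sym: "\<forall>u\<in>S. \<forall>v\<in>S. R u v = R v u"
    and nonneg: "\<And>g. 0 \<le> quad_form S R g" and "quad_form S R f \<le> 0"
  shows "(\<Sum>v\<in>S. R x v * f v) = 0"
proof (rule ccontr)
  define b where "b = (\<Sum>v\<in>S. R x v * f v)"
  define d where "d = \<bar>R x x\<bar> + 1"
  assume "(\<Sum>v\<in>S. R x v * f v) \<noteq> 0"
  then have "0 < b\<^sup>2" unfolding b_def by simp
  have "0 < d" unfolding d_def by simp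
  have "0 \<le> quad_form S R (\<lambda>u. f u + (if u = x then - b / d else 0))"
    by (rule nonneg)
  also have "\<dots> \<le> 2 * (- b / d) * b + (- b / d)\<^sup>2 * R x x"
    using quad_form_add_point[OF assms(1-3), of f "- b / d"] assms(5)
    unfolding b_def[symmetric] by linarith
  also have "\<dots> = (b\<^sup>2 / d\<^sup>2) * (R x x - 2 * d)"
    using \<open>0 < d\<close> by (simp add: field_simps power2_eq_square)
  also have "\<dots> < 0"
    using \<open>0 < b\<^sup>2\<close> \<open>0 < d\<close> unfolding d_def by (intro mult_pos_neg) auto
  finally show False by simp
qed

lemma stoquastic_offdiag_nonpos:
  assumes "stoquastic_term n A" "u \<in> basis n" "v \<in> basis n" "u \<noteq> v"
  shows "Re (A u v) \<le> 0"
  using assms unfolding stoquastic_term_def by simp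

lemma stoquastic_hermitian_entry_real:
  assumes "hermitian n A" "stoquastic_term n A" "u \<in> basis n" "v \<in> basis n"
  shows "A u v = complex_of_real (Re (A u v))"
proof (cases "u = v")
  case True
  then have "A u u = cnj (A u u)" using assms(1,3) unfolding hermitian_def by blast
  then have "Im (A u u) = 0" by (metis cnj.simps(2) complex.expand neg_equal_zero)
  then show ?thesis using True by (simp add: complex_eq_iff)
next
  case False
  then have "A u v \<in> \<real>" using assms(2-4) unfolding stoquastic_term_def by blast
  then show ?thesis by (simp add: complex_is_Real_iff complex_eq_iff)
qed

lemma psd_diag_nonneg:
  assumes "psd n A" "u \<in> basis n"
  shows "0 \<le> Re (A u u)"
proof -
  let ?e = "\<lambda>w. if w = u then (1::complex) else 0"
  have "0 \<le> Re (\<Sum>x\<in>basis n. cnj (?e x) * mat_vec n A ?e x)"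
    using assms(1) unfolding psd_def by (elim conjE allE)
  also have "(\<Sum>x\<in>basis n. cnj (?e x) * mat_vec n A ?e x)
      = (\<Sum>x\<in>basis n. if x = u then mat_vec n A ?e x else 0)"
    by (intro sum.cong) auto
  also have "\<dots> = mat_vec n A ?e u" using finite_basis assms(2) by simp
  also have "\<dots> = A u u"
    using finite_basis assms(2) unfolding mat_vec_def by (simp add: if_distrib cong: if_cong)
  finally show ?thesis .
qed

lemma psd_stoquastic_quad_form_nonneg:
  assumes "psd n A" "stoquastic_term n A"
  shows "0 \<le> quad_form (basis n) (\<lambda>u v. Re (A u v)) f"
proof -
  let ?f = "\<lambda>v. complex_of_real (f v)"
  have herm: "hermitian n A" using assms(1) psd_def by blast
  have "(\<Sum>u\<in>basis n. cnj (?f u) * mat_vec n A ?f u)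
      = complex_of_real (quad_form (basis n) (\<lambda>u v. Re (A u v)) f)"
    unfolding quad_form_def mat_vec_def of_real_sum sum_distrib_left
  proof (intro sum.cong refl)
    fix u v assume "u \<in> basis n" "v \<in> basis n"
    then show "cnj (?f u) * (A u v * ?f v) = complex_of_real (f u * Re (A u v) * f v)"
      by (subst stoquastic_hermitian_entry_real[OF herm assms(2)]) auto
  qed
  moreover have "0 \<le> Re (\<Sum>u\<in>basis n. cnj (?f u) * mat_vec n A ?f u)"
    using assms(1) unfolding psd_def by (elim conjE allE)
  ultimately show ?thesis by simp
qed

lemma stoquastic_quad_form_cmod_le:
  assumes herm: "hermitian n A" and stoq: "stoquastic_term n A"
  shows "quad_form (basis n) (\<lambda>u v. Re (A u v)) (\<lambda>u. cmod (w u))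
    \<le> Re (\<Sum>u\<in>basis n. cnj (w u) * mat_vec n A w u)"
proof -
  have term_le: "cmod (w u) * Re (A u v) * cmod (w v) \<le> Re (cnj (w u) * (A u v * w v))"
    if uv: "u \<in> basis n" "v \<in> basis n" for u v
  proof -
    have e: "Re (cnj (w u) * (A u v * w v)) = Re (A u v) * Re (cnj (w u) * w v)"
      by (subst stoquastic_hermitian_entry_real[OF herm stoq uv]) (simp add: algebra_simps)
    show ?thesis
    proof (cases "u = v")
      case True
      have "Re (cnj (w u) * w u) = (cmod (w u))\<^sup>2"
        by (simp add: cmod_power2) (simp add: power2_eq_square)
      then show ?thesis using e True by (simp add: power2_eq_square mult.commute)
    next
      case False
      have "Re (cnj (w u) * w v) \<le> cmod (w u) * cmod (w v)"
        using complex_Re_le_cmod[of "cnj (w u) * w v"] by (simp add: norm_mult)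
      moreover have "Re (A u v) \<le> 0" using stoquastic_offdiag_nonpos[OF stoq uv False] .
      ultimately have "Re (A u v) * (cmod (w u) * cmod (w v)) \<le> Re (A u v) * Re (cnj (w u) * w v)"
        by (rule mult_left_mono_neg)
      moreover have "cmod (w u) * Re (A u v) * cmod (w v) = Re (A u v) * (cmod (w u) * cmod (w v))"
        by (simp only: mult_ac)
      ultimately show ?thesis using e by linarith
    qed
  qed
  have "quad_form (basis n) (\<lambda>u v. Re (A u v)) (\<lambda>u. cmod (w u))
      \<le> (\<Sum>u\<in>basis n. \<Sum>v\<in>basis n. Re (cnj (w u) * (A u v * w v)))"
    unfolding quad_form_def by (intro sum_mono term_le)
  also have "\<dots> = Re (\<Sum>u\<in>basis n. cnj (w u) * mat_vec n A w u)"
    unfolding mat_vec_def by (simp add: sum_distrib_left)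
  finally show ?thesis .
qed

lemma stoquastic_kernel_vanishing_propagates:
  assumes psd: "psd n A" and stoq: "stoquastic_term n A"
    and kernel: "\<forall>u\<in>basis n. mat_vec n A w u = 0"
    and "w x = 0" and x: "x \<in> basis n" and y: "y \<in> basis n" and neg: "Re (A y x) < 0"
  shows "w y = 0"
proof -
  have herm: "hermitian n A" using psd psd_def by blast
  have sym: "\<forall>u\<in>basis n. \<forall>v\<in>basis n. Re (A u v) = Re (A v u)"
    using herm unfolding hermitian_def by (metis cnj.simps(1))
  have form_nonneg: "\<And>g. 0 \<le> quad_form (basis n) (\<lambda>u v. Re (A u v)) g"
    by (rule psd_stoquastic_quad_form_nonneg[OF psd stoq])
  have modulus_form: "quad_form (basis n) (\<lambda>u v. Re (A u v)) (\<lambda>u. cmod (w u)) \<le> 0"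
    using stoquastic_quad_form_cmod_le[OF herm stoq, of w] kernel by simp
  have row_zero: "(\<Sum>v\<in>basis n. Re (A x v) * cmod (w v)) = 0"
    using quad_form_minimiser_kernel[OF finite_basis x sym form_nonneg modulus_form] .
  have nonneg: "0 \<le> - (Re (A x v) * cmod (w v))" if v: "v \<in> basis n" for v
  proof (cases "v = x")
    case False
    then show ?thesis
      using stoquastic_offdiag_nonpos[OF stoq x v] by (simp add: mult_nonpos_nonneg)
  qed (use \<open>w x = 0\<close> in simp)
  have "(\<Sum>v\<in>basis n. - (Re (A x v) * cmod (w v))) = 0"
    using row_zero by (simp add: sum_negf)
  then have "\<forall>v\<in>basis n. Re (A x v) * cmod (w v) = 0"
    using sum_nonneg_eq_0_iff[OF finite_basis nonneg] by simp
  then have "Re (A x y) * cmod (w y) = 0" using y by blast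
  moreover have "Re (A x y) < 0" using sym x y neg by metis
  ultimately show ?thesis by simp
qed

lemma mat_vec_ham_sum: "mat_vec n (ham_sum M Hs) w u = (\<Sum>b=1..M. mat_vec n (Hs b) w u)"
  unfolding mat_vec_def ham_sum_def by (simp add: sum_distrib_right sum.swap[of _ "basis n"])

lemma ham_sum_psd_eigenvalue_nonneg:
  assumes psds: "\<forall>b\<in>{1..M}. psd n (Hs b)" and eig: "eigvec n (ham_sum M Hs) w mu"
  shows "0 \<le> Re mu"
proof -
  define N where "N = (\<Sum>u\<in>basis n. (cmod (w u))\<^sup>2)"
  obtain u0 where u0: "u0 \<in> basis n" "w u0 \<noteq> 0" using eig unfolding eigvec_def by blast
  have "0 < N" unfolding N_def using finite_basis u0 by (intro sum_pos2[where i=u0]) auto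
  have "mu * complex_of_real N = (\<Sum>u\<in>basis n. cnj (w u) * mat_vec n (ham_sum M Hs) w u)"
    using eig unfolding eigvec_def N_def of_real_sum sum_distrib_left
    by (intro sum.cong refl) (simp add: complex_mult_cnj cmod_power2 mult.commute)
  also have "\<dots> = (\<Sum>b=1..M. \<Sum>u\<in>basis n. cnj (w u) * mat_vec n (Hs b) w u)"
    unfolding mat_vec_ham_sum sum_distrib_left by (rule sum.swap)
  finally have eq: "mu * complex_of_real N
      = (\<Sum>b=1..M. \<Sum>u\<in>basis n. cnj (w u) * mat_vec n (Hs b) w u)" .
  have "Re mu * N = Re (mu * complex_of_real N)" by simp
  also have "\<dots> = (\<Sum>b=1..M. Re (\<Sum>u\<in>basis n. cnj (w u) * mat_vec n (Hs b) w u))"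
    unfolding eq by (rule Re_sum)
  also have "\<dots> \<ge> 0" using psds unfolding psd_def by (intro sum_nonneg) blast
  finally show ?thesis using \<open>0 < N\<close> by (simp add: zero_le_mult_iff)
qed

lemma frustration_free_zero_mode_terms:
  assumes ff: "frustration_free n M Hs"
    and zero: "\<forall>z\<in>basis n. mat_vec n (ham_sum M Hs) psi z = 0"
    and nonzero: "x \<in> basis n" "psi x \<noteq> 0" and a: "a \<in> {1..M}"
  shows "\<forall>z\<in>basis n. mat_vec n (Hs a) psi z = 0"
proof -
  have "ground_state n (ham_sum M Hs) psi"
    unfolding ground_state_def
  proof (intro exI[of _ 0] conjI allI impI)
    show "eigvec n (ham_sum M Hs) psi 0" unfolding eigvec_def using zero nonzero by auto
    fix w mu assume "eigvec n (ham_sum M Hs) w mu"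
    then show "Re 0 \<le> Re mu"
      using ff ham_sum_psd_eigenvalue_nonneg[of M n Hs w mu] unfolding frustration_free_def by simp
  qed
  then show ?thesis using ff a unfolding frustration_free_def by blast
qed

lemma zero_projector_column_kernel:
  assumes "zero_projector n A P" "u \<in> basis n"
  shows "\<forall>z\<in>basis n. mat_vec n A (\<lambda>w. P w u) z = 0"
  using assms unfolding zero_projector_def mat_vec_def mat_mult_def by auto

lemma zero_projector_diag_pos:
  assumes proj: "zero_projector n A P" and kernel: "\<forall>z\<in>basis n. mat_vec n A psi z = 0"
    and x: "x \<in> basis n" "psi x \<noteq> 0"
  shows "P x x = complex_of_real (\<Sum>w\<in>basis n. (cmod (P x w))\<^sup>2)"
    and "0 < Re (P x x)"
proof -
  have herm: "P w x = cnj (P x w)" if "w \<in> basis n" for w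
    using proj x that unfolding zero_projector_def hermitian_def by blast
  have "P x x = (\<Sum>w\<in>basis n. P x w * P w x)"
    using proj x unfolding zero_projector_def mat_mult_def by simp
  also have "\<dots> = complex_of_real (\<Sum>w\<in>basis n. (cmod (P x w))\<^sup>2)"
    unfolding of_real_sum by (intro sum.cong refl) (simp add: herm complex_mult_cnj cmod_power2)
  finally show diag: "P x x = complex_of_real (\<Sum>w\<in>basis n. (cmod (P x w))\<^sup>2)" .
  have "mat_vec n P psi x = psi x" using proj kernel x unfolding zero_projector_def by blast
  then obtain w where "w \<in> basis n" "P x w \<noteq> 0"
    using x(2) unfolding mat_vec_def by (metis (no_types, lifting) mult_eq_0_iff sum.neutral)
  then have "0 < (\<Sum>w\<in>basis n. (cmod (P x w))\<^sup>2)"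
    using finite_basis by (intro sum_pos2) auto
  then show "0 < Re (P x x)" using diag by simp
qed

context
  fixes n :: nat and A :: qop and psi :: qvec and x y :: "bool list"
  assumes psd: "psd n A" and stoq: "stoquastic_term n A"
    and kernel: "\<forall>z\<in>basis n. mat_vec n A psi z = 0"
    and nonneg: "\<forall>z\<in>basis n. psi z \<in> \<real> \<and> 0 \<le> Re (psi z)"
    and x: "x \<in> basis n" "0 < Re (psi x)" and y: "y \<in> basis n"
    and neg: "Re (A y x) < 0"
begin

lemma zero_mode_support_propagates: "0 < Re (psi y)"
proof -
  have real: "psi u = complex_of_real (Re (psi u))" if "u \<in> basis n" for u
    using nonneg that by (simp add: complex_is_Real_iff complex_eq_iff)
  have "x \<noteq> y" using psd_diag_nonneg[OF psd y] neg by auto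
  have "0 = Re (mat_vec n A psi y)" using kernel y by simp
  also have "\<dots> = (\<Sum>u\<in>basis n. Re (A y u) * Re (psi u))"
    unfolding mat_vec_def Re_sum by (intro sum.cong refl) (subst real, auto)
  also have "\<dots> = Re (A y y) * Re (psi y) + Re (A y x) * Re (psi x)
      + (\<Sum>u\<in>basis n - {y} - {x}. Re (A y u) * Re (psi u))"
    using finite_basis x y \<open>x \<noteq> y\<close>
    by (simp add: sum.remove[of "basis n" y] sum.remove[of "basis n - {y}" x])
  finally have row: "\<dots> = 0" ..
  have "(\<Sum>u\<in>basis n - {y} - {x}. Re (A y u) * Re (psi u)) \<le> 0"
  proof (rule sum_nonpos)
    fix u assume u: "u \<in> basis n - {y} - {x}"
    then have "Re (A y u) \<le> 0" using stoquastic_offdiag_nonpos[OF stoq y] by auto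
    then show "Re (A y u) * Re (psi u) \<le> 0" using nonneg u by (simp add: mult_nonpos_nonneg)
  qed
  moreover have "Re (A y x) * Re (psi x) < 0" using neg x by (simp add: mult_neg_pos)
  ultimately have "0 < Re (A y y) * Re (psi y)" using row by linarith
  then show ?thesis using nonneg y by (cases "Re (psi y) = 0") auto
qed

lemma zero_mode_ratio:
  assumes v: "\<forall>z\<in>basis n. mat_vec n A v z = 0"
  shows "v y * psi x = v x * psi y"
proof -
  define c where "c = v x / psi x"
  have "psi x \<noteq> 0" using x by auto
  have "mat_vec n A (\<lambda>u. v u - c * psi u) z = mat_vec n A v z - c * mat_vec n A psi z" for z
    unfolding mat_vec_def by (simp add: algebra_simps sum_subtractf sum_distrib_left)
  then have "\<forall>z\<in>basis n. mat_vec n A (\<lambda>u. v u - c * psi u) z = 0"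
    using v kernel by simp
  moreover have "v x - c * psi x = 0" unfolding c_def using \<open>psi x \<noteq> 0\<close> by simp
  ultimately have "v y - c * psi y = 0"
    using stoquastic_kernel_vanishing_propagates[OF psd stoq _ _ x(1) y neg] by blast
  then show ?thesis unfolding c_def using \<open>psi x \<noteq> 0\<close> by (simp add: field_simps)
qed

lemma zero_mode_projector_diag_ratio:
  assumes proj: "zero_projector n A P"
  shows "Re (P y y) / Re (P x x) = (Re (psi y) / Re (psi x))\<^sup>2"
proof -
  define r where "r = Re (psi y) / Re (psi x)"
  have real: "psi u = complex_of_real (Re (psi u))" if "u \<in> basis n" for u
    using nonneg that by (simp add: complex_is_Real_iff complex_eq_iff)
  obtain c where c: "P x x = complex_of_real c" "0 < c"
    using zero_projector_diag_pos[OF proj kernel x(1)] x(2) by fastforce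
  have "Re (psi y) = r * Re (psi x)" unfolding r_def using x(2) by simp
  then have psi_y: "psi y = complex_of_real r * psi x"
    by (subst real[OF y], subst real[OF x(1)]) (metis of_real_mult)
  have "psi x \<noteq> 0" using x(2) by auto
  have "P y x * psi x = P x x * psi y"
    using zero_mode_ratio[OF zero_projector_column_kernel[OF proj x(1)]] by simp
  then have "P y x = complex_of_real (c * r)"
    using c(1) psi_y \<open>psi x \<noteq> 0\<close> by (simp add: field_simps)
  moreover have "P x y = cnj (P y x)"
    using proj x(1) y unfolding zero_projector_def hermitian_def by blast
  ultimately have "P x y = complex_of_real (c * r)" by simp
  moreover have "P y y * psi x = P x y * psi y"
    using zero_mode_ratio[OF zero_projector_column_kernel[OF proj y]] by simp
  ultimately have "P y y = complex_of_real (c * r * r)"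
    using psi_y \<open>psi x \<noteq> 0\<close> by (simp add: field_simps)
  then show ?thesis using c unfolding r_def[symmetric] by (simp add: power2_eq_square)
qed

end

theorem lemma4p5:
  fixes n M k :: nat and Hs Pi :: "nat \<Rightarrow> qop" and psi :: qvec
    and x y :: "bool list" and a :: nat
  assumes local: "\<forall>b\<in>{1..M}. k_local n k (Hs b)"
    and stoq: "\<forall>b\<in>{1..M}. stoquastic_term n (Hs b)"
    and ff: "frustration_free n M Hs"
    and proj: "\<forall>b\<in>{1..M}. zero_projector n (Hs b) (Pi b)"
    and psi: "nonneg_state n psi"
    and ground: "\<forall>z\<in>basis n. mat_vec n (ham_sum M Hs) psi z = 0"
    and x: "x \<in> support n psi"
    and y: "y \<in> basis n"
    and a: "a \<in> {1..M}"
    and neg: "Hs a y x \<in> \<real> \<and> Re (Hs a y x) < 0"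
  shows "y \<in> support n psi \<and>
    psi y / psi x = complex_of_real (sqrt (Re (Pi a y y) / Re (Pi a x x)))"
proof -
  have px: "x \<in> basis n" "0 < Re (psi x)" using x unfolding support_def by auto
  have nonneg: "\<forall>z\<in>basis n. psi z \<in> \<real> \<and> 0 \<le> Re (psi z)"
    using psi unfolding nonneg_state_def by blast
  have psd: "psd n (Hs a)" using ff a unfolding frustration_free_def by blast
  have kernel: "\<forall>z\<in>basis n. mat_vec n (Hs a) psi z = 0"
    using frustration_free_zero_mode_terms[OF ff ground px(1) _ a] px(2) by fastforce
  note zero_mode = psd stoq[rule_format, OF a] kernel nonneg px y conjunct2[OF neg]
  have py: "0 < Re (psi y)" by (rule zero_mode_support_propagates[OF zero_mode])
  have "psi y / psi x = complex_of_real (Re (psi y) / Re (psi x))"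
    using nonneg px(1) y by (simp add: complex_is_Real_iff complex_eq_iff)
  also have "Re (psi y) / Re (psi x) = sqrt (Re (Pi a y y) / Re (Pi a x x))"
    using zero_mode_projector_diag_ratio[OF zero_mode proj[rule_format, OF a]] py px(2) by simp
  finally show ?thesis using py y unfolding support_def by simp
qed

end
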